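(* Let the reals $e^1_{j,n},e^2_{j,n},v_{j,n}$ ($0\le j\le J$, $1\le n\le N$) and $d^1_{j,n},d^2_{j,n}$ ($0\le j\le J$, $1\le n\le N-1$) be feasible for $\mathbf L_H^{\mathcal X,\mathcal T}$ (described in the context). Then the associated Markovian semi-static trading strategy super-replicates the American claim along every path with $x_{t_n}\in\mathcal X$ for $1\le n\le N$: for every $(x_{t_1},\dots,x_{t_N})\in\mathcal X^N$ and every exercise time $\rho\in\mathcal T$, $\mathcal G_T(x_{t_1},\dots,x_{t_N},\rho)\ge a(x_\rho,\rho)$.
   Context: Fix integers $N\ge1$, $J\ge1$, times $0=t_0<t_1<\dots<t_N=T$, $\mathcal T=\{t_1,\dots,t_N\}$, strikes $0<x_1<\dots<x_J$, $x_0=0$, $\mathcal X=\{x_0,\dots,x_J\}$, numbers $p_{j,n}$ ($0\le j\le J$, $1\le n\le N$) (the risk-neutral probabilities $\mathbb P(X_{t_n}=x_j)$ implied by call prices), and a payoff $a:\mathcal X\times\mathcal T\to[0,\infty)$. $\mathbf L_H^{\mathcal X,\mathcal T}$ is the linear program: over reals $e^1_{j,n},e^2_{j,n},v_{j,n}$ ($1\le n\le N$) and $d^1_{j,n},d^2_{j,n}$ ($1\le n\le N-1$), with $e^1_{j,N}=e^2_{j,1}=0$, minimise $\sum_{j,n}(e^1_{j,n}+e^2_{j,n})p_{j,n}+\sum_jv_{j,N}p_{j,N}$ subject to $v_{j,n}\ge0$ and (i) $v_{j,n}\ge a(x_j,t_n)$; (ii) $e^1_{j,n}+e^2_{k,n+1}+(x_k-x_j)d^1_{j,n}\ge0$;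 (iii) $e^1_{j,n}+e^2_{k,n+1}+(x_k-x_j)d^2_{j,n}-v_{j,n}+v_{k,n+1}\ge0$ for all $0\le j,k\le J$, $1\le n\le N-1$. The associated Markovian semi-static strategy holds the European claim paying $b_{j,n}$ at $t_n$ if $X_{t_n}=x_j$, where $b_{j,n}=e^1_{j,n}+e^2_{j,n}$ for $n<N$ and $b_{j,N}=e^1_{j,N}+e^2_{j,N}+v_{j,N}$, and over $[t_n,t_{n+1}]$ ($1\le n\le N-1$) holds $d^1_{j,n}$ units of stock if $x_{t_n}=x_j$ and exercise has not occurred by $t_n$ (i.e. $n<\mathcal N(\rho)$), and $d^2_{j,n}$ units if $x_{t_n}=x_j$ and $n\ge\mathcal N(\rho)$, where $\mathcal N(\rho)=\min\{n:t_n\ge\rho\}$ for exercise time $\rho$. Its terminal payoff along $(x_{t_1},\dots,x_{t_N})$ with exercise at $\rho$ is $\mathcal G_T=\sum_{n,j}b_{j,n}1_{\{x_{t_n}=x_j\}}+\sum_{n=1}^{\mathcal N(\rho)-1}d^1_{n}(x_{t_n})(x_{t_{n+1}}-x_{t_n})+\sum_{n=\mathcal N(\rho)}^{N-1}d^2_{n}(x_{t_n})(x_{t_{n+1}}-x_{t_n})$, with $d^\delta_n(x_j):=d^\delta_{j,n}$. *)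

theory Defs
  imports "HOL-Analysis.Analysis"
begin

text \<open>Strike grid: x 0 = 0 < x 1 < ... < x J. Times t 0 = 0 < t 1 < ... < t N.
  Strategy variables are indexed (j, n) with j the strike index and n the time index.\<close>

definition feasible_LH ::
  "nat \<Rightarrow> nat \<Rightarrow> (nat \<Rightarrow> real) \<Rightarrow> (nat \<Rightarrow> nat \<Rightarrow> real)
   \<Rightarrow> (nat \<Rightarrow> nat \<Rightarrow> real) \<Rightarrow> (nat \<Rightarrow> nat \<Rightarrow> real) \<Rightarrow> (nat \<Rightarrow> nat \<Rightarrow> real)
   \<Rightarrow> (nat \<Rightarrow> nat \<Rightarrow> real) \<Rightarrow> (nat \<Rightarrow> nat \<Rightarrow> real) \<Rightarrow> bool" where
  "feasible_LH N J x a e1 e2 v d1 d2 \<longleftrightarrow>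
     (\<forall>j\<le>J. e1 j N = 0 \<and> e2 j 1 = 0) \<and>
     (\<forall>j\<le>J. \<forall>n\<in>{1..N}. v j n \<ge> 0 \<and> v j n \<ge> a j n) \<and>
     (\<forall>j\<le>J. \<forall>k\<le>J. \<forall>n\<in>{1..N-1}.
        e1 j n + e2 k (n+1) + (x k - x j) * d1 j n \<ge> 0 \<and>
        e1 j n + e2 k (n+1) + (x k - x j) * d2 j n - v j n + v k (n+1) \<ge> 0)"

definition exN :: "nat \<Rightarrow> (nat \<Rightarrow> real) \<Rightarrow> real \<Rightarrow> nat" where
  "exN N t \<rho> = (LEAST n. 1 \<le> n \<and> n \<le> N \<and> t n \<ge> \<rho>)"

definition bcoef :: "nat \<Rightarrow> (nat \<Rightarrow> nat \<Rightarrow> real) \<Rightarrow> (nat \<Rightarrow> nat \<Rightarrow> real)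
   \<Rightarrow> (nat \<Rightarrow> nat \<Rightarrow> real) \<Rightarrow> nat \<Rightarrow> nat \<Rightarrow> real" where
  "bcoef N e1 e2 v j n = (if n < N then e1 j n + e2 j n else e1 j N + e2 j N + v j N)"

text \<open>Terminal payoff G_T along the path given by strike indices ix 1, ..., ix N
  (i.e. x_{t_n} = x (ix n)), with exercise at time rho.\<close>
definition GT ::
  "nat \<Rightarrow> nat \<Rightarrow> (nat \<Rightarrow> real) \<Rightarrow> (nat \<Rightarrow> real)
   \<Rightarrow> (nat \<Rightarrow> nat \<Rightarrow> real) \<Rightarrow> (nat \<Rightarrow> nat \<Rightarrow> real) \<Rightarrow> (nat \<Rightarrow> nat \<Rightarrow> real)
   \<Rightarrow> (nat \<Rightarrow> nat \<Rightarrow> real) \<Rightarrow> (nat \<Rightarrow> nat \<Rightarrow> real)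
   \<Rightarrow> (nat \<Rightarrow> nat) \<Rightarrow> real \<Rightarrow> real" where
  "GT N J x t e1 e2 v d1 d2 ix \<rho> =
     (\<Sum>n=1..N. \<Sum>j\<le>J. if ix n = j then bcoef N e1 e2 v j n else 0)
     + (\<Sum>n\<in>{1..<exN N t \<rho>}. d1 (ix n) n * (x (ix (n+1)) - x (ix n)))
     + (\<Sum>n\<in>{exN N t \<rho>..N-1}. d2 (ix n) n * (x (ix (n+1)) - x (ix n)))"

end

theory Submission
  imports Defs
begin

text \<open>Pair the forward-start claim \<open>e1\<close> paid at time \<open>n\<close> with the backward-start
  claim \<open>e2\<close> paid at time \<open>n + 1\<close> and with the stock position held in between. Before
  exercise, constraint (ii) makes each such one-period gain nonnegative; from exercise on,
  constraint (iii) bounds it below by the decrease of \<open>v\<close> along the path, so these gains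
  telescope to at least \<open>v(x\<^sub>\<rho>, \<rho>) - v(x\<^sub>T, T)\<close>. The claim \<open>v\<close> paid at \<open>T\<close> then leaves
  \<open>v(x\<^sub>\<rho>, \<rho>) \<ge> a(x\<^sub>\<rho>, \<rho>)\<close>.\<close>

definition step_gain ::
  "(nat \<Rightarrow> real) \<Rightarrow> (nat \<Rightarrow> nat \<Rightarrow> real) \<Rightarrow> (nat \<Rightarrow> nat \<Rightarrow> real) \<Rightarrow> (nat \<Rightarrow> nat \<Rightarrow> real)
   \<Rightarrow> (nat \<Rightarrow> nat) \<Rightarrow> nat \<Rightarrow> real" where
  "step_gain x e1 e2 d ix n =
     e1 (ix n) n + e2 (ix (n+1)) (n+1) + d (ix n) n * (x (ix (n+1)) - x (ix n))"

lemma sum_atLeastAtMost_shift_second: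
  fixes f g :: "nat \<Rightarrow> 'a::comm_monoid_add"
  assumes "1 \<le> N"
  shows "(\<Sum>n=1..N. f n + g n) = (\<Sum>n=1..<N. f n + g (n+1)) + g 1 + f N"
  using assms
proof (induction N rule: dec_induct)
  case base
  then show ?case by (simp add: ac_simps)
next
  case (step n)
  have "(\<Sum>k=1..Suc n. f k + g k) = (\<Sum>k=1..<n. f k + g (k+1)) + g 1 + f n + (f (Suc n) + g (Suc n))"
    using step by simp
  also have "\<dots> = (\<Sum>k=1..<Suc n. f k + g (k+1)) + g 1 + f (Suc n)"
    using step.hyps(1) by (simp add: ac_simps)
  finally show ?case .
qed

lemma exN_bounds:
  assumes "k \<in> {1..N}" and "\<rho> \<le> t k"
  shows "1 \<le> exN N t \<rho>" and "exN N t \<rho> \<le> N"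
proof -
  have "1 \<le> exN N t \<rho> \<and> exN N t \<rho> \<le> N \<and> \<rho> \<le> t (exN N t \<rho>)"
    unfolding exN_def by (rule LeastI[of _ k]) (use assms in auto)
  then show "1 \<le> exN N t \<rho>" and "exN N t \<rho> \<le> N" by auto
qed

lemma static_payoff_eq:
  assumes "1 \<le> N" and "\<And>n. n \<in> {1..N} \<Longrightarrow> ix n \<le> J"
    and "e1 (ix N) N = 0" and "e2 (ix 1) 1 = 0"
  shows "(\<Sum>n=1..N. \<Sum>j\<le>J. if ix n = j then bcoef N e1 e2 v j n else 0)
    = (\<Sum>n=1..<N. e1 (ix n) n + e2 (ix (n+1)) (n+1)) + v (ix N) N"
proof -
  have "(\<Sum>n=1..N. \<Sum>j\<le>J. if ix n = j then bcoef N e1 e2 v j n else 0)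
      = (\<Sum>n=1..N. bcoef N e1 e2 v (ix n) n)"
    using assms(2) by (intro sum.cong) auto
  also have "\<dots> = (\<Sum>n=1..N. e1 (ix n) n + e2 (ix n) n + (if n = N then v (ix N) N else 0))"
    by (intro sum.cong) (auto simp: bcoef_def)
  also have "\<dots> = (\<Sum>n=1..N. e1 (ix n) n + e2 (ix n) n) + v (ix N) N"
    using assms(1) by (simp add: sum.distrib)
  also have "\<dots> = (\<Sum>n=1..<N. e1 (ix n) n + e2 (ix (n+1)) (n+1)) + v (ix N) N"
    using sum_atLeastAtMost_shift_second[OF assms(1), of "\<lambda>n. e1 (ix n) n" "\<lambda>n. e2 (ix n) n"]
      assms(3,4) by simp
  finally show ?thesis .
qed

lemma GT_eq_step_gains:
  assumes "1 \<le> exN N t \<rho>" and "exN N t \<rho> \<le> N" and "\<And>n. n \<in> {1..N} \<Longrightarrow> ix n \<le> J"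
    and "e1 (ix N) N = 0" and "e2 (ix 1) 1 = 0"
  shows "GT N J x t e1 e2 v d1 d2 ix \<rho> =
    (\<Sum>n=1..<exN N t \<rho>. step_gain x e1 e2 d1 ix n)
    + (\<Sum>n=exN N t \<rho>..<N. step_gain x e1 e2 d2 ix n) + v (ix N) N"
proof -
  let ?m = "exN N t \<rho>" and ?c = "\<lambda>n. e1 (ix n) n + e2 (ix (n+1)) (n+1)"
    and ?D = "\<lambda>n. x (ix (n+1)) - x (ix n)"
  have "1 \<le> N" using assms(1,2) by linarith
  have "{?m..N-1} = {?m..<N}" using \<open>1 \<le> N\<close> by auto
  then have "GT N J x t e1 e2 v d1 d2 ix \<rho> = (\<Sum>n=1..<N. ?c n) + v (ix N) N
      + (\<Sum>n=1..<?m. d1 (ix n) n * ?D n) + (\<Sum>n=?m..<N. d2 (ix n) n * ?D n)"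
    using static_payoff_eq[of N ix J e1 e2 v, OF \<open>1 \<le> N\<close> assms(3-5)]
    unfolding GT_def by simp
  also have "(\<Sum>n=1..<N. ?c n) = (\<Sum>n=1..<?m. ?c n) + (\<Sum>n=?m..<N. ?c n)"
    using assms(1,2) by (simp add: sum.atLeastLessThan_concat)
  finally show ?thesis
    by (simp add: step_gain_def sum.distrib)
qed

lemma
  assumes "feasible_LH N J x a e1 e2 v d1 d2"
    and "n \<in> {1..<N}" and "ix n \<le> J" and "ix (n+1) \<le> J"
  shows step_gain_before_exercise_nonneg: "0 \<le> step_gain x e1 e2 d1 ix n"
    and step_gain_after_exercise_ge:
      "v (ix n) n - v (ix (n+1)) (n+1) \<le> step_gain x e1 e2 d2 ix n"
proof -
  have "n \<in> {1..N-1}" using assms(2) by auto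
  then have "0 \<le> e1 (ix n) n + e2 (ix (n+1)) (n+1) + (x (ix (n+1)) - x (ix n)) * d1 (ix n) n"
    and "0 \<le> e1 (ix n) n + e2 (ix (n+1)) (n+1) + (x (ix (n+1)) - x (ix n)) * d2 (ix n) n
           - v (ix n) n + v (ix (n+1)) (n+1)"
    using assms(1,3,4) unfolding feasible_LH_def by blast+
  then show "0 \<le> step_gain x e1 e2 d1 ix n"
    and "v (ix n) n - v (ix (n+1)) (n+1) \<le> step_gain x e1 e2 d2 ix n"
    by (simp_all add: step_gain_def algebra_simps)
qed

theorem mainTheorem6:
  fixes N J :: nat and t x :: "nat \<Rightarrow> real" and a e1 e2 v d1 d2 :: "nat \<Rightarrow> nat \<Rightarrow> real"
    and ix :: "nat \<Rightarrow> nat" and \<rho> :: real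
  assumes "N \<ge> 1" and "J \<ge> 1"
    and "t 0 = 0" and "strict_mono_on {0..N} t"
    and "x 0 = 0" and "strict_mono_on {0..J} x"
    and "\<And>j n. j \<le> J \<Longrightarrow> n \<in> {1..N} \<Longrightarrow> a j n \<ge> 0"
    and "feasible_LH N J x a e1 e2 v d1 d2"
    and "\<And>n. n \<in> {1..N} \<Longrightarrow> ix n \<le> J"
    and "\<rho> \<in> t ` {1..N}"
  shows "GT N J x t e1 e2 v d1 d2 ix \<rho> \<ge> a (ix (exN N t \<rho>)) (exN N t \<rho>)"
proof -
  define m where "m = exN N t \<rho>"
  note feasible = assms(8) and ixJ = assms(9)
  obtain k where k: "k \<in> {1..N}" "\<rho> = t k" using assms(10) by auto
  have m1: "1 \<le> m" and mN: "m \<le> N"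
    using exN_bounds[OF k(1)] k(2) unfolding m_def by auto
  have "e1 (ix N) N = 0" "e2 (ix 1) 1 = 0"
    using feasible ixJ assms(1) unfolding feasible_LH_def by auto
  then have GT: "GT N J x t e1 e2 v d1 d2 ix \<rho> = (\<Sum>n=1..<m. step_gain x e1 e2 d1 ix n)
      + (\<Sum>n=m..<N. step_gain x e1 e2 d2 ix n) + v (ix N) N"
    using GT_eq_step_gains m1 mN ixJ unfolding m_def by blast
  have "0 \<le> (\<Sum>n=1..<m. step_gain x e1 e2 d1 ix n)"
    using mN ixJ by (intro sum_nonneg step_gain_before_exercise_nonneg[OF feasible]) auto
  moreover have "(\<Sum>n=m..<N. v (ix n) n - v (ix (n+1)) (n+1))
      \<le> (\<Sum>n=m..<N. step_gain x e1 e2 d2 ix n)"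
    using m1 ixJ by (intro sum_mono step_gain_after_exercise_ge[OF feasible]) auto
  moreover have "(\<Sum>n=m..<N. v (ix n) n - v (ix (n+1)) (n+1)) = v (ix m) m - v (ix N) N"
    using sum_Suc_diff'[OF mN, of "\<lambda>n. v (ix n) n"] by (simp add: sum_negf[symmetric] sum_subtractf)
  moreover have "a (ix m) m \<le> v (ix m) m"
    using feasible ixJ m1 mN unfolding feasible_LH_def by auto
  ultimately have "a (ix m) m \<le> GT N J x t e1 e2 v d1 d2 ix \<rho>"
    unfolding GT by linarith
  then show ?thesis by (simp add: m_def)
qed

end
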